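(* Let $G$ be a mixed abelian group with torsion subgroup $T$. Let $A$ be a direct summand of $G$ containing a subgroup $N$ as an essential subgroup. Suppose $G = H \oplus K$ is a decomposition with $N \subseteq H$, and let $\pi: G \to H$ be the standard projection along $K$. Then the restriction of $\pi$ to $A$ is injective, and $\pi(A)$ is a direct summand of $G$ and also a direct summand of $H$.
   Context: All groups are additively written abelian groups; a mixed group is one containing both non-zero elements of finite order and elements of infinite order. A subgroup $N$ of a group $A$ is essential in $A$ if $N \cap S \neq \{0\}$ for every non-zero subgroup $S$ of $A$. *)

theory Defs
  imports Main
begin

text \<open>The ambient abelian group G is the whole carrier (UNIV) of a type of class ab_group_add.\<close>

definition subgrp :: "'a::ab_group_add set \<Rightarrow> bool" where
  "subgrp S \<longleftrightarrow> 0 \<in> S \<and> (\<forall>x\<in>S. \<forall>y\<in>S. x + y \<in> S) \<and> (\<forall>x\<in>S. - x \<in> S)"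

definition sumset :: "'a::ab_group_add set \<Rightarrow> 'a set \<Rightarrow> 'a set" where
  "sumset A B = {a + b | a b. a \<in> A \<and> b \<in> B}"

definition int_direct_sum :: "'a::ab_group_add set \<Rightarrow> 'a set \<Rightarrow> 'a set \<Rightarrow> bool" where
  "int_direct_sum S H K \<longleftrightarrow> subgrp H \<and> subgrp K \<and> H \<inter> K = {0} \<and> sumset H K = S"

definition direct_summand :: "'a::ab_group_add set \<Rightarrow> 'a set \<Rightarrow> bool" where
  "direct_summand A S \<longleftrightarrow> (\<exists>B. int_direct_sum S A B)"

definition essential_in :: "'a::ab_group_add set \<Rightarrow> 'a set \<Rightarrow> bool" where
  "essential_in N A \<longleftrightarrow> subgrp N \<and> N \<subseteq> A \<and>
     (\<forall>S. subgrp S \<and> S \<subseteq> A \<and> S \<noteq> {0} \<longrightarrow> N \<inter> S \<noteq> {0})"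

definition nmul :: "nat \<Rightarrow> 'a::ab_group_add \<Rightarrow> 'a" where
  "nmul n x = (((+) x) ^^ n) 0"

definition torsion_part :: "'a::ab_group_add set" where
  "torsion_part = {x. \<exists>n>0. nmul n x = 0}"

definition mixed_group :: "'a::ab_group_add itself \<Rightarrow> bool" where
  "mixed_group _ \<longleftrightarrow> (\<exists>x::'a. x \<noteq> 0 \<and> x \<in> torsion_part) \<and> (\<exists>y::'a. y \<notin> torsion_part)"

definition proj :: "'a::ab_group_add set \<Rightarrow> 'a set \<Rightarrow> 'a \<Rightarrow> 'a" where
  "proj H K g = (THE h. h \<in> H \<and> g - h \<in> K)"

end

theory Submission
  imports Defs "HOL.Modules"
begin

text \<open>Write G = A \<oplus> B and let \<theta> = p \<circ> \<pi> restricted to A, where p is the projection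
  onto A along B. Since N \<subseteq> A \<inter> H, \<theta> fixes N pointwise. An endomorphism of A fixing an
  essential subgroup is an automorphism: its kernel meets N trivially, and \<open>id - \<theta>\<close> kills N, so
  it maps every element into the torsion part, where an induction on the order shows that
  \<theta> is onto. Because p \<circ> \<pi> is bijective on A, \<pi> is injective on A and \<pi>(A) is again a
  complement of B, so G = \<pi>(A) \<oplus> B; as \<pi>(A) \<subseteq> H, the modular law gives
  H = \<pi>(A) \<oplus> (H \<inter> B).\<close>

lemma subgrp_0: "subgrp S \<Longrightarrow> 0 \<in> S"
  unfolding subgrp_def by blast

lemma subgrp_add: "subgrp S \<Longrightarrow> x \<in> S \<Longrightarrow> y \<in> S \<Longrightarrow> x + y \<in> S"
  unfolding subgrp_def by blast

lemma subgrp_minus: "subgrp S \<Longrightarrow> x \<in> S \<Longrightarrow> - x \<in> S"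
  unfolding subgrp_def by blast

lemma subgrp_diff: "subgrp S \<Longrightarrow> x \<in> S \<Longrightarrow> y \<in> S \<Longrightarrow> x - y \<in> S"
  by (metis diff_conv_add_uminus subgrp_add subgrp_minus)

lemma subgrp_Int: "subgrp S \<Longrightarrow> subgrp T \<Longrightarrow> subgrp (S \<inter> T)"
  unfolding subgrp_def by blast

lemma subgrp_image:
  assumes f: "additive f" and S: "subgrp S"
  shows "subgrp (f ` S)"
  unfolding subgrp_def
proof (intro conjI ballI)
  show "0 \<in> f ` S"
    using subgrp_0[OF S] additive.zero[OF f] by (metis image_eqI)
  fix x y assume "x \<in> f ` S" "y \<in> f ` S"
  then obtain a b where a: "a \<in> S" "x = f a" and b: "b \<in> S" "y = f b"
    by blast
  have "x + y = f (a + b)" "- x = f (- a)"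
    using a(2) b(2) additive.add[OF f] additive.minus[OF f] by simp_all
  then show "x + y \<in> f ` S" "- x \<in> f ` S"
    using subgrp_add[OF S a(1) b(1)] subgrp_minus[OF S a(1)] by simp_all
qed

lemma int_direct_sumD:
  assumes "int_direct_sum S H K"
  shows "subgrp H" "subgrp K" "H \<inter> K = {0}" "sumset H K = S"
  using assms unfolding int_direct_sum_def by blast+

lemma int_direct_sum_UNIV_decomp:
  assumes "int_direct_sum UNIV H K"
  obtains h where "h \<in> H" "g - h \<in> K"
proof -
  have "g \<in> sumset H K"
    using int_direct_sumD(4)[OF assms] by simp
  then obtain h k where "h \<in> H" "k \<in> K" "g = h + k"
    unfolding sumset_def by blast
  then show thesis
    using that by simp
qed

lemma int_direct_sum_decomp_unique:
  assumes "int_direct_sum S H K" "h \<in> H" "g - h \<in> K" "h' \<in> H" "g - h' \<in> K"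
  shows "h = h'"
proof -
  have "h - h' \<in> H"
    using assms int_direct_sumD(1) subgrp_diff by blast
  moreover have "(g - h') - (g - h) \<in> K"
    using assms int_direct_sumD(2) subgrp_diff by blast
  ultimately have "h - h' \<in> H \<inter> K"
    by simp
  then show ?thesis
    using int_direct_sumD(3)[OF assms(1)] by simp
qed

context
  fixes H K :: "'a::ab_group_add set"
  assumes HK: "int_direct_sum UNIV H K"
begin

lemma proj_mem: "proj H K g \<in> H" and diff_proj_mem: "g - proj H K g \<in> K"
proof -
  obtain h where h: "h \<in> H" "g - h \<in> K"
    using int_direct_sum_UNIV_decomp[OF HK] .
  have "proj H K g \<in> H \<and> g - proj H K g \<in> K"
    unfolding proj_def
    by (rule theI[of _ h]) (use h int_direct_sum_decomp_unique[OF HK] in blast)+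
  then show "proj H K g \<in> H" "g - proj H K g \<in> K"
    by blast+
qed

lemma proj_eqI: "h \<in> H \<Longrightarrow> g - h \<in> K \<Longrightarrow> proj H K g = h"
  using int_direct_sum_decomp_unique[OF HK] proj_mem diff_proj_mem by blast

lemma proj_eq_self: "h \<in> H \<Longrightarrow> proj H K h = h"
  by (rule proj_eqI) (simp_all add: subgrp_0 int_direct_sumD(2)[OF HK])

lemma proj_eq_0_iff: "proj H K g = 0 \<longleftrightarrow> g \<in> K"
  using proj_eqI[of 0 g] diff_proj_mem[of g] subgrp_0[OF int_direct_sumD(1)[OF HK]] by auto

lemma additive_proj: "additive (proj H K)"
proof
  fix x y
  have "x + y - (proj H K x + proj H K y) = (x - proj H K x) + (y - proj H K y)"
    by simp
  also have "\<dots> \<in> K"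
    using subgrp_add[OF int_direct_sumD(2)[OF HK]] diff_proj_mem by blast
  finally show "proj H K (x + y) = proj H K x + proj H K y"
    by (intro proj_eqI subgrp_add[OF int_direct_sumD(1)[OF HK]] proj_mem)
qed

end

lemma int_direct_sum_image:
  assumes AB: "int_direct_sum UNIV A B" and f: "additive f"
    and bij: "bij_betw (\<lambda>a. proj A B (f a)) A A"
  shows "int_direct_sum UNIV (f ` A) B"
  unfolding int_direct_sum_def
proof (intro conjI)
  have A: "subgrp A" and B: "subgrp B"
    using int_direct_sumD[OF AB] by simp_all
  show "subgrp (f ` A)" "subgrp B"
    using subgrp_image[OF f A] B .
  show "f ` A \<inter> B = {0}"
  proof (intro equalityI subsetI)
    fix x assume "x \<in> f ` A \<inter> B"
    then obtain a where a: "a \<in> A" "x = f a" "f a \<in> B"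
      by blast
    have "proj A B (f a) = 0" "proj A B (f 0) = 0"
      using a(3) subgrp_0[OF B] by (simp_all add: proj_eq_0_iff[OF AB] additive.zero[OF f])
    then have "a = 0"
      using inj_onD[OF bij_betw_imp_inj_on[OF bij] _ a(1) subgrp_0[OF A]] by simp
    then show "x \<in> {0}"
      using a(2) additive.zero[OF f] by simp
  qed (use subgrp_0[OF subgrp_image[OF f A]] subgrp_0[OF B] in simp)
  show "sumset (f ` A) B = UNIV"
  proof (intro equalityI subsetI)
    fix x :: 'a
    have "proj A B x \<in> (\<lambda>a. proj A B (f a)) ` A"
      using bij_betw_imp_surj_on[OF bij] proj_mem[OF AB] by simp
    then obtain a where a: "a \<in> A" "proj A B x = proj A B (f a)"
      by blast
    have "x - f a = (x - proj A B x) - (f a - proj A B (f a))"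
      using a(2) by simp
    also have "\<dots> \<in> B"
      using subgrp_diff[OF B] diff_proj_mem[OF AB] by blast
    finally show "x \<in> sumset (f ` A) B"
      unfolding sumset_def using a(1) by (intro CollectI exI[of _ "f a"] exI[of _ "x - f a"]) simp
  qed simp
qed

lemma int_direct_sum_restrict:
  assumes CB: "int_direct_sum UNIV C B" and H: "subgrp H" and CH: "C \<subseteq> H"
  shows "int_direct_sum H C (H \<inter> B)"
  unfolding int_direct_sum_def
proof (intro conjI)
  show "subgrp C" "subgrp (H \<inter> B)"
    using int_direct_sumD[OF CB] subgrp_Int[OF H] by simp_all
  show "C \<inter> (H \<inter> B) = {0}"
    using int_direct_sumD(3)[OF CB] CH subgrp_0[OF H] by blast
  show "sumset C (H \<inter> B) = H"
  proof (intro equalityI subsetI)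
    fix x assume "x \<in> sumset C (H \<inter> B)"
    then show "x \<in> H"
      unfolding sumset_def using CH subgrp_add[OF H] by blast
  next
    fix x assume x: "x \<in> H"
    obtain c where c: "c \<in> C" "x - c \<in> B"
      using int_direct_sum_UNIV_decomp[OF CB] .
    have "x - c \<in> H"
      using subgrp_diff[OF H x] c(1) CH by blast
    then show "x \<in> sumset C (H \<inter> B)"
      unfolding sumset_def using c by (intro CollectI exI[of _ c] exI[of _ "x - c"]) simp
  qed
qed

lemma nmul_0 [simp]: "nmul 0 x = 0"
  by (simp add: nmul_def)

lemma nmul_Suc: "nmul (Suc n) x = x + nmul n x"
  by (simp add: nmul_def)

lemma nmul_add: "nmul (m + n) x = nmul m x + nmul n x"
  by (induction m) (simp_all add: nmul_Suc add.assoc)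

lemma nmul_mult_eq_0: "nmul m x = 0 \<Longrightarrow> nmul (m * q) x = 0"
  by (induction q) (simp_all add: nmul_add)

lemma nmul_mod:
  assumes "nmul m x = 0"
  shows "nmul n x = nmul (n mod m) x"
proof -
  have "nmul n x = nmul (m * (n div m)) x + nmul (n mod m) x"
    by (metis mult_div_mod_eq nmul_add)
  then show ?thesis
    by (simp add: nmul_mult_eq_0[OF assms])
qed

lemma (in additive) nmul: "f (nmul n x) = nmul n (f x)"
  by (induction n) (simp_all add: nmul_Suc add zero)

lemma subgrp_nmul: "subgrp S \<Longrightarrow> x \<in> S \<Longrightarrow> nmul n x \<in> S"
  by (induction n) (simp_all add: nmul_Suc subgrp_0 subgrp_add)

text \<open>The cyclic subgroup generated by y; only natural multiples are available,
  hence the differences.\<close>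
definition multiples :: "'a::ab_group_add \<Rightarrow> 'a set" where
  "multiples y = {nmul m y - nmul n y | m n. True}"

lemma subgrp_multiples: "subgrp (multiples y)"
  unfolding subgrp_def
proof (intro conjI ballI)
  have "0 = nmul 0 y - nmul 0 y"
    by simp
  then show "0 \<in> multiples y"
    unfolding multiples_def by blast
  fix x z assume "x \<in> multiples y" "z \<in> multiples y"
  then obtain a b c d where x: "x = nmul a y - nmul b y" and z: "z = nmul c y - nmul d y"
    unfolding multiples_def by blast
  have "x + z = nmul (a + c) y - nmul (b + d) y"
    using x z by (simp add: nmul_add)
  then show "x + z \<in> multiples y"
    unfolding multiples_def by blast
  have "- x = nmul b y - nmul a y"
    using x by simp
  then show "- x \<in> multiples y"
    unfolding multiples_def by blast
qed

lemma multiples_subset: "subgrp S \<Longrightarrow> y \<in> S \<Longrightarrow> multiples y \<subseteq> S"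
  unfolding multiples_def using subgrp_diff subgrp_nmul by blast

lemma mem_multiples_self: "y \<in> multiples y"
proof -
  have "y = nmul 1 y - nmul 0 y"
    by (simp add: nmul_Suc)
  then show ?thesis
    unfolding multiples_def by blast
qed

lemma multiplesE:
  assumes "x \<in> multiples y"
  obtains k where "x = nmul k y" | k where "- x = nmul k y"
proof -
  obtain m n where x: "x = nmul m y - nmul n y"
    using assms unfolding multiples_def by blast
  show thesis
  proof (cases "n \<le> m")
    case True
    then have "nmul m y = nmul (m - n) y + nmul n y"
      using nmul_add[of "m - n" n y] by simp
    then show thesis
      using that(1)[of "m - n"] x by simp
  next
    case False
    then have "nmul n y = nmul (n - m) y + nmul m y"
      using nmul_add[of "n - m" m y] by simp
    then show thesis
      using that(2)[of "n - m"] x by simp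
  qed
qed

lemma essential_inD:
  assumes "essential_in N A" "subgrp S" "S \<subseteq> A" "S \<noteq> {0}"
  obtains x where "x \<in> N" "x \<in> S" "x \<noteq> 0"
proof -
  have "N \<inter> S \<noteq> {0}" "0 \<in> N \<inter> S"
    using assms subgrp_0[of N] subgrp_0[of S] unfolding essential_in_def by auto
  then show thesis
    using that by blast
qed

lemma essential_in_nmul:
  assumes ess: "essential_in N A" and A: "subgrp A" and y: "y \<in> A" "y \<noteq> 0"
  obtains n where "n > 0" "nmul n y \<in> N" "nmul n y \<noteq> 0"
proof -
  have N: "subgrp N"
    using ess unfolding essential_in_def by blast
  have "multiples y \<noteq> {0}"
    using mem_multiples_self y(2) by blast
  then obtain x where x: "x \<in> N" "x \<in> multiples y" "x \<noteq> 0"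
    using essential_inD[OF ess subgrp_multiples multiples_subset[OF A y(1)]] by blast
  obtain k where k: "nmul k y \<in> N" "nmul k y \<noteq> 0"
  proof (cases rule: multiplesE[OF x(2)])
    case (1 k)
    then show thesis
      using that[of k] x by simp
  next
    case (2 k)
    then show thesis
      using that[of k] subgrp_minus[OF N x(1)] x(3) unfolding 2[symmetric] by simp
  qed
  moreover have "k > 0"
    using k(2) by (intro gr0I) auto
  ultimately show thesis
    using that by blast
qed

lemma essential_in_nmul_less:
  assumes "essential_in N A" "subgrp A" "y \<in> A" "y \<noteq> 0" "m > 0" "nmul m y = 0"
  obtains d where "0 < d" "d < m" "nmul d y \<in> N"
proof -
  obtain n where n: "nmul n y \<in> N" "nmul n y \<noteq> 0"
    using essential_in_nmul[OF assms(1-4)] by blast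
  have e: "nmul n y = nmul (n mod m) y"
    using nmul_mod[OF assms(6)] .
  have "n mod m \<noteq> 0"
  proof
    assume "n mod m = 0"
    then show False
      using e n(2) by simp
  qed
  then show thesis
    using that[of "n mod m"] n(1) e assms(5) by simp
qed

context
  fixes N A :: "'a::ab_group_add set" and f :: "'a \<Rightarrow> 'a"
  assumes ess: "essential_in N A" and A: "subgrp A" and f: "additive f"
    and maps: "f ` A \<subseteq> A" and fixes_N: "\<And>x. x \<in> N \<Longrightarrow> f x = x"
begin

lemma inj_on_if_fixes_essential: "inj_on f A"
proof (rule inj_onI)
  let ?ker = "{a \<in> A. f a = 0}"
  have "subgrp ?ker"
    using A additive.zero[OF f] additive.add[OF f] additive.minus[OF f]
    unfolding subgrp_def by auto
  have ker: "?ker = {0}"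
  proof (rule ccontr)
    assume "?ker \<noteq> {0}"
    then obtain x where "x \<in> N" "x \<in> ?ker" "x \<noteq> 0"
      using essential_inD[OF ess \<open>subgrp ?ker\<close>] by blast
    then show False
      using fixes_N by simp
  qed
  fix x y assume "x \<in> A" "y \<in> A" "f x = f y"
  then have "x - y \<in> ?ker"
    by (simp add: subgrp_diff[OF A] additive.diff[OF f])
  then show "x = y"
    using ker by simp
qed

lemma nmul_diff_eq_0_if_fixes_essential:
  assumes "nmul n y \<in> N"
  shows "nmul n (y - f y) = 0"
proof -
  have "additive (\<lambda>x. x - f x)"
    by (rule additive.intro) (simp add: additive.add[OF f])
  then have "nmul n (y - f y) = nmul n y - f (nmul n y)"
    by (metis additive.nmul)
  then show ?thesis
    using fixes_N[OF assms] by simp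
qed

lemma in_image_if_diff_in_image:
  assumes y: "y \<in> A" and "y - f y \<in> f ` A"
  shows "y \<in> f ` A"
proof -
  obtain a where a: "a \<in> A" "y - f y = f a"
    using assms(2) by blast
  then have "y = f (y + a)"
    by (simp add: additive.add[OF f] algebra_simps)
  then show ?thesis
    using subgrp_add[OF A y a(1)] by blast
qed

lemma zero_in_image: "0 \<in> f ` A"
  using subgrp_0[OF A] additive.zero[OF f] by (metis image_eqI)

text \<open>Some \<open>0 < d < m\<close> puts \<open>d t\<close> into N, so \<open>d (t - f t) = 0\<close> and induction applies to
  \<open>t - f t\<close>.\<close>
lemma torsion_in_image_if_fixes_essential:
  assumes "t \<in> A" "m > 0" "nmul m t = 0"
  shows "t \<in> f ` A"
  using assms
proof (induction m arbitrary: t rule: less_induct)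
  case (less m t)
  show ?case
  proof (cases "t = 0")
    case True
    then show ?thesis
      using zero_in_image by simp
  next
    case False
    obtain d where d: "0 < d" "d < m" "nmul d t \<in> N"
      using essential_in_nmul_less[OF ess A less.prems(1) False less.prems(2,3)] .
    have "t - f t \<in> A"
      using subgrp_diff[OF A less.prems(1)] maps less.prems(1) by blast
    then have "t - f t \<in> f ` A"
      using less.IH[OF d(2) _ d(1)] nmul_diff_eq_0_if_fixes_essential[OF d(3)] by blast
    then show ?thesis
      using in_image_if_diff_in_image[OF less.prems(1)] by blast
  qed
qed

lemma surj_on_if_fixes_essential: "f ` A = A"
proof (intro equalityI subsetI)
  fix y assume y: "y \<in> A"
  show "y \<in> f ` A"
  proof (cases "y = 0")
    case True
    then show ?thesis
      using zero_in_image by simp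
  next
    case False
    obtain n where n: "n > 0" "nmul n y \<in> N"
      using essential_in_nmul[OF ess A y False] by blast
    have "y - f y \<in> A"
      using subgrp_diff[OF A y] maps y by blast
    then have "y - f y \<in> f ` A"
      using torsion_in_image_if_fixes_essential n(1) nmul_diff_eq_0_if_fixes_essential[OF n(2)]
      by blast
    then show ?thesis
      using in_image_if_diff_in_image[OF y] by blast
  qed
qed (use maps in blast)

lemma bij_betw_if_fixes_essential: "bij_betw f A A"
  using inj_on_if_fixes_essential surj_on_if_fixes_essential by (simp add: bij_betw_def)

end

theorem lemma2p4:
  fixes A N H K :: "'a::ab_group_add set"
  assumes "mixed_group TYPE('a)"
    and "direct_summand A (UNIV :: 'a set)"
    and "essential_in N A"
    and "int_direct_sum (UNIV :: 'a set) H K"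
    and "N \<subseteq> H"
  shows "inj_on (proj H K) A \<and> direct_summand (proj H K ` A) (UNIV :: 'a set)
           \<and> direct_summand (proj H K ` A) H"
proof -
  obtain B where AB: "int_direct_sum UNIV A B"
    using assms(2) unfolding direct_summand_def by blast
  note HK = assms(4)
  have NA: "N \<subseteq> A"
    using assms(3) unfolding essential_in_def by blast
  let ?\<theta> = "\<lambda>a. proj A B (proj H K a)"
  have "additive ?\<theta>"
    by (rule additive.intro)
      (simp add: additive.add[OF additive_proj[OF AB]] additive.add[OF additive_proj[OF HK]])
  moreover have "?\<theta> ` A \<subseteq> A"
    using proj_mem[OF AB] by blast
  moreover have "?\<theta> x = x" if "x \<in> N" for x
    using proj_eq_self[OF HK] proj_eq_self[OF AB] that NA assms(5) by (simp add: subsetD)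
  ultimately have bij: "bij_betw ?\<theta> A A"
    using bij_betw_if_fixes_essential[OF assms(3) int_direct_sumD(1)[OF AB]] by blast
  have G: "int_direct_sum UNIV (proj H K ` A) B"
    using int_direct_sum_image[OF AB additive_proj[OF HK] bij] .
  have "inj_on (proj A B \<circ> proj H K) A"
    using bij_betw_imp_inj_on[OF bij] by (simp add: comp_def)
  then have "inj_on (proj H K) A"
    by (rule inj_on_imageI2)
  moreover have "int_direct_sum H (proj H K ` A) (H \<inter> B)"
    using int_direct_sum_restrict[OF G int_direct_sumD(1)[OF HK]] proj_mem[OF HK] by blast
  ultimately show ?thesis
    using G unfolding direct_summand_def by blast
qed

end
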